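(* Fix a round $t$ and the graph $G$ described in the context. Run the simulated annealing chain described in the context, and let $\mathcal{J}\subseteq\mathbb{V}$ be the set of vertices of maximal energy $E$. Then $$\lim_{j\to\infty}\mathbb{P}(\mathcal{V}_j\in\mathcal{J})=1.$$
   Context: Setting: users $\mathbb{K}=\{1,\dots,K\}$, with $1\le m<K$. At the fixed round $t$ each user has real values $u_k=\mathrm{ucb}(k,t-1)$, $g_k(t-1)$, $p_k(t-1)$, with ties in $u$ broken by a fixed total order. $\Phi_{\rm g}$ and $\Phi_{\rm p}$ are bounded functions of $(\{g_k(t-1)\}_{k\in\mathcal{V}},\mathcal{V})$ and $(\{p_k(t-1)\}_{k\in\mathcal{V}},\mathcal{V})$ respectively, with ranges $\Delta_{\Phi_{\rm g}},\Delta_{\Phi_{\rm p}}$. The constants satisfy $\alpha,\gamma>0$. Energy: for an $m$-set $\mathcal{V}$, $$E(\mathcal{V})=\min_{k\in\mathcal{V}}u_k+\alpha\Phi_{\rm g}(\{g_k(t-1)\}_{k\in\mathcal{V}},\mathcal{V})+\gamma\Phi_{\rm p}(\{p_k(t-1)\}_{k\in\mathcal{V}},\mathcal{V}).$$ Graph: the vertex set $\mathbb{V}$ consists of all $m$-subsets of $\mathbb{K}$. $\mathcal{U}$ is an active neighbor of $\mathcal{V}$ if $|\mathcal{V}\cap\mathcal{U}|=m-1$ and the element of $\mathcal{V}\setminus\mathcal{U}$ is $\arg\min_{k\in\mathcal{V}}u_k$. $\mathcal{V}$ and $\mathcal{U}$ are neighbors if one is an active neighbor of the other. $\mathcal{N}_{\mathcal{V}}$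 denotes the neighbor set of $\mathcal{V}$. Temperature: let $k_m$ be the user with the $m$-th largest $u$, and set $C=u_{k_m}-\min_{k'\in\mathbb{K}}u_{k'}+\alpha\Delta_{\Phi_{\rm g}}+\gamma\Delta_{\Phi_{\rm p}}$. The temperature at iteration $j$ is $\tau_j=C/\log(j+1)$. Simulated annealing chain: - $\mathcal{V}_1\in\mathbb{V}$ is arbitrary. - At iteration $j$, sample $\mathcal{U}$ uniformly from $\mathcal{N}_{\mathcal{V}_j}$. - If $E(\mathcal{U})\ge E(\mathcal{V}_j)$, set $\mathcal{V}_{j+1}=\mathcal{U}$. - Otherwise, set $\mathcal{V}_{j+1}=\mathcal{U}$ with probability $\exp\!\big(-(E(\mathcal{V}_j)-E(\mathcal{U}))/\tau_j\big)$, and $\mathcal{V}_{j+1}=\mathcal{V}_j$ with the remaining probability. *)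

theory Defs
  imports "HOL-Probability.Probability" "HOL-Library.FuncSet"
begin

definition vertices :: "nat \<Rightarrow> nat \<Rightarrow> nat set set" where
  "vertices K m = {V. V \<subseteq> {1..K} \<and> card V = m}"

definition energy ::
  "(nat \<Rightarrow> real) \<Rightarrow> (nat \<Rightarrow> real) \<Rightarrow> (nat \<Rightarrow> real) \<Rightarrow>
   ((nat \<Rightarrow> real) \<Rightarrow> nat set \<Rightarrow> real) \<Rightarrow> ((nat \<Rightarrow> real) \<Rightarrow> nat set \<Rightarrow> real) \<Rightarrow>
   real \<Rightarrow> real \<Rightarrow> nat set \<Rightarrow> real" where
  "energy u g p Phig Phip \<alpha> \<gamma> V =
     Min (u ` V) + \<alpha> * Phig (restrict g V) V + \<gamma> * Phip (restrict p V) V"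

text \<open>Argmin of u over V, ties broken by the fixed total order given by an injective
  rk function: k precedes k' iff (u k, rk k) is lexicographically smaller.\<close>
definition argmin_u :: "(nat \<Rightarrow> real) \<Rightarrow> (nat \<Rightarrow> nat) \<Rightarrow> nat set \<Rightarrow> nat" where
  "argmin_u u rk V = (THE k. k \<in> V \<and>
      (\<forall>k'\<in>V. k' \<noteq> k \<longrightarrow> u k < u k' \<or> (u k = u k' \<and> rk k < rk k')))"

definition active_nbr :: "(nat \<Rightarrow> real) \<Rightarrow> (nat \<Rightarrow> nat) \<Rightarrow> nat \<Rightarrow> nat set \<Rightarrow> nat set \<Rightarrow> bool" where
  "active_nbr u rk m V U \<longleftrightarrow> card (V \<inter> U) = m - 1 \<and> V - U = {argmin_u u rk V}"

definition nbrs :: "(nat \<Rightarrow> real) \<Rightarrow> (nat \<Rightarrow> nat) \<Rightarrow> nat \<Rightarrow> nat \<Rightarrow> nat set \<Rightarrow> nat set set" where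
  "nbrs u rk K m V = {U \<in> vertices K m. active_nbr u rk m V U \<or> active_nbr u rk m U V}"

definition fun_range_width :: "((nat \<Rightarrow> real) \<Rightarrow> nat set \<Rightarrow> real) \<Rightarrow> real" where
  "fun_range_width Phi = (SUP x. case_prod Phi x) - (INF x. case_prod Phi x)"

text \<open>Value u_{k_m}: the m-th largest of u 1, ..., u K (with multiplicity).\<close>
definition mth_largest :: "(nat \<Rightarrow> real) \<Rightarrow> nat \<Rightarrow> nat \<Rightarrow> real" where
  "mth_largest u K m = rev (sort (map u [1..<K+1])) ! (m - 1)"

definition temp_const ::
  "(nat \<Rightarrow> real) \<Rightarrow> nat \<Rightarrow> nat \<Rightarrow>
   ((nat \<Rightarrow> real) \<Rightarrow> nat set \<Rightarrow> real) \<Rightarrow> ((nat \<Rightarrow> real) \<Rightarrow> nat set \<Rightarrow> real) \<Rightarrow>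
   real \<Rightarrow> real \<Rightarrow> real" where
  "temp_const u K m Phig Phip \<alpha> \<gamma> =
     mth_largest u K m - Min (u ` {1..K}) + \<alpha> * fun_range_width Phig + \<gamma> * fun_range_width Phip"

definition temperature :: "real \<Rightarrow> nat \<Rightarrow> real" where
  "temperature C j = C / ln (real j + 1)"

definition sa_step :: "(nat set \<Rightarrow> real) \<Rightarrow> (nat set \<Rightarrow> nat set set) \<Rightarrow> real \<Rightarrow>
    nat set \<Rightarrow> nat set pmf" where
  "sa_step E N tau V = do {
     U \<leftarrow> pmf_of_set (N V);
     if E U \<ge> E V then return_pmf U
     else map_pmf (\<lambda>b. if b then U else V) (bernoulli_pmf (exp (- (E V - E U) / tau)))
   }"

text \<open>Law of V_j (j \<ge> 1), starting from V_1 = V1.\<close>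
fun sa_law :: "(nat set \<Rightarrow> real) \<Rightarrow> (nat set \<Rightarrow> nat set set) \<Rightarrow> real \<Rightarrow> nat set \<Rightarrow>
    nat \<Rightarrow> nat set pmf" where
  "sa_law E N C V1 0 = return_pmf V1"
| "sa_law E N C V1 (Suc 0) = return_pmf V1"
| "sa_law E N C V1 (Suc (Suc j)) =
     sa_law E N C V1 (Suc j) \<bind> sa_step E N (temperature C (Suc j))"

end

theory Submission
  imports Defs
begin

text \<open>
  The chain is a Metropolis chain at inverse temperature \<open>\<beta>\<^sub>n = ln (n + 1) / C\<close>, reversible
  with respect to \<open>\<pi>\<^sub>n x = deg x * exp (- \<beta>\<^sub>n (Emax - E x))\<close>. Let \<open>\<mu>\<^sub>n\<close> be the law of \<open>V\<^sub>n\<close>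
  and \<open>Q\<^sub>n = \<Sum>x. \<mu>\<^sub>n x\<^sup>2 / \<pi>\<^sub>n x\<close> (\<open>sqnorm n (dens V\<^sub>1 n)\<close> below). One step of the chain lowers
  \<open>Q\<^sub>n\<close> by the Dirichlet form \<open>D\<^sub>n\<close> of the two-step chain, while passing from \<open>\<beta>\<^sub>n\<close> to \<open>\<beta>\<^sub>n\<^sub>+\<^sub>1\<close> raises the weight of a
  non-maximiser by at most a factor \<open>1 + 1/(n+1)\<close>. A Poincare-type inequality, proved along
  paths in the neighbour graph each of whose steps carries weight of order \<open>1/n\<close> in \<open>D\<^sub>n\<close>,
  absorbs this increase into \<open>D\<^sub>n\<close> up to a term \<open>O(exp (- \<beta>\<^sub>n \<eta>) Q\<^sub>n)\<close>, where \<open>\<eta>\<close> is the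
  smallest positive gap \<open>Emax - E x\<close>. As \<open>exp (- \<beta>\<^sub>n \<eta>) / (n + 1) = (n + 1) powr (- 1 - \<eta> / C)\<close>
  is summable, \<open>Q\<^sub>n\<close> stays bounded, and by Cauchy-Schwarz
  \<open>P(V\<^sub>n \<notin> J)\<^sup>2 \<le> \<pi>\<^sub>n(S - J) Q\<^sub>n = O(exp (- \<beta>\<^sub>n \<eta>)) \<longrightarrow> 0\<close>.

  For the swap graph on \<open>m\<close>-subsets it remains to see that it is connected (repeatedly swapping
  out the minimiser leads to the \<open>m\<close>-set of largest keys) and that \<open>C\<close> bounds the oscillation
  of the energy.
\<close>

section \<open>Weighted means and reversible kernels\<close>

lemma weighted_mean_square_eq:
  fixes p \<phi> :: "'a \<Rightarrow> real"
  assumes "finite A" and "(\<Sum>a\<in>A. p a) = 1"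
  shows "(\<Sum>a\<in>A. p a * \<phi> a)\<^sup>2 = (\<Sum>a\<in>A. p a * (\<phi> a)\<^sup>2)
          - (\<Sum>a\<in>A. \<Sum>b\<in>A. p a * p b * (\<phi> a - \<phi> b)\<^sup>2) / 2"
proof -
  have "(\<Sum>a\<in>A. \<Sum>b\<in>A. p a * p b * (\<phi> a - \<phi> b)\<^sup>2)
      = (\<Sum>a\<in>A. \<Sum>b\<in>A. p b * (p a * (\<phi> a)\<^sup>2) + p a * (p b * (\<phi> b)\<^sup>2)
                        - 2 * ((p a * \<phi> a) * (p b * \<phi> b)))"
    by (intro sum.cong refl) (simp add: power2_eq_square algebra_simps)
  also have "\<dots> = 2 * (\<Sum>a\<in>A. p a * (\<phi> a)\<^sup>2) - 2 * (\<Sum>a\<in>A. p a * \<phi> a)\<^sup>2"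
  proof -
    have "(\<Sum>a\<in>A. \<Sum>b\<in>A. p b * (p a * (\<phi> a)\<^sup>2)) = (\<Sum>b\<in>A. p b) * (\<Sum>a\<in>A. p a * (\<phi> a)\<^sup>2)"
      by (simp add: sum_distrib_left sum_distrib_right)
    moreover have "(\<Sum>a\<in>A. \<Sum>b\<in>A. p a * (p b * (\<phi> b)\<^sup>2)) = (\<Sum>a\<in>A. p a) * (\<Sum>b\<in>A. p b * (\<phi> b)\<^sup>2)"
      by (simp only: sum_product)
    moreover have "(\<Sum>a\<in>A. \<Sum>b\<in>A. 2 * ((p a * \<phi> a) * (p b * \<phi> b))) = 2 * (\<Sum>a\<in>A. p a * \<phi> a)\<^sup>2"
      by (simp add: power2_eq_square sum_product flip: sum_distrib_left)
    ultimately show ?thesis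
      using assms(2) by (simp add: sum.distrib sum_subtractf)
  qed
  finally show ?thesis by (simp add: field_simps)
qed

lemma weighted_mean_square_le:
  fixes p \<phi> :: "'a \<Rightarrow> real"
  assumes "finite A" and "(\<Sum>a\<in>A. p a) = 1" and "\<And>a. a \<in> A \<Longrightarrow> 0 \<le> p a"
  shows "(\<Sum>a\<in>A. p a * \<phi> a)\<^sup>2 \<le> (\<Sum>a\<in>A. p a * (\<phi> a)\<^sup>2)"
proof -
  have "0 \<le> (\<Sum>a\<in>A. \<Sum>b\<in>A. p a * p b * (\<phi> a - \<phi> b)\<^sup>2)"
    using assms(3) by (intro sum_nonneg mult_nonneg_nonneg) auto
  then show ?thesis
    using weighted_mean_square_eq[OF assms(1,2), of \<phi>] by linarith
qed

lemma reversible_mean_square_eq: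
  fixes P :: "'a \<Rightarrow> 'a \<Rightarrow> real" and \<pi> \<phi> :: "'a \<Rightarrow> real"
  assumes "finite S" and rows: "\<And>x. x \<in> S \<Longrightarrow> (\<Sum>y\<in>S. P x y) = 1"
    and balance: "\<And>x y. x \<in> S \<Longrightarrow> y \<in> S \<Longrightarrow> \<pi> x * P x y = \<pi> y * P y x"
  shows "(\<Sum>y\<in>S. \<pi> y * (\<Sum>a\<in>S. P y a * \<phi> a)\<^sup>2) = (\<Sum>x\<in>S. \<pi> x * (\<phi> x)\<^sup>2)
     - (\<Sum>y\<in>S. \<Sum>a\<in>S. \<Sum>b\<in>S. \<pi> y * P y a * P y b * (\<phi> a - \<phi> b)\<^sup>2) / 2"
proof -
  have "(\<Sum>y\<in>S. \<pi> y * (\<Sum>a\<in>S. P y a * (\<phi> a)\<^sup>2)) = (\<Sum>a\<in>S. \<Sum>y\<in>S. \<pi> y * P y a * (\<phi> a)\<^sup>2)"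
    by (subst sum.swap) (simp add: sum_distrib_left mult.assoc)
  also have "\<dots> = (\<Sum>a\<in>S. \<Sum>y\<in>S. \<pi> a * (\<phi> a)\<^sup>2 * P a y)"
    by (intro sum.cong refl) (simp add: balance)
  also have "\<dots> = (\<Sum>a\<in>S. \<pi> a * (\<phi> a)\<^sup>2)"
    by (intro sum.cong refl) (simp add: rows flip: sum_distrib_left)
  finally have "(\<Sum>y\<in>S. \<pi> y * (\<Sum>a\<in>S. P y a * (\<phi> a)\<^sup>2)) = (\<Sum>a\<in>S. \<pi> a * (\<phi> a)\<^sup>2)" .
  then show ?thesis
    using assms(1)
    by (simp add: weighted_mean_square_eq[OF assms(1) rows] right_diff_distrib sum_subtractf
        sum_divide_distrib sum_distrib_left mult.assoc)
qed

lemma le_exp_suminf_of_growth: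
  fixes a c :: "nat \<Rightarrow> real"
  assumes growth: "\<And>n. n \<ge> n\<^sub>0 \<Longrightarrow> a (Suc n) \<le> a n * (1 + c n)"
    and "\<And>n. 0 \<le> c n" and "\<And>n. 0 \<le> a n" and "summable c" and "n \<ge> n\<^sub>0"
  shows "a n \<le> a n\<^sub>0 * exp (suminf c)"
proof -
  have "a n \<le> a n\<^sub>0 * exp (\<Sum>i\<in>{n\<^sub>0..<n}. c i)"
    using \<open>n \<ge> n\<^sub>0\<close>
  proof (induction n rule: dec_induct)
    case (step n)
    have "a (Suc n) \<le> a n * (1 + c n)"
      by (rule growth[OF step.hyps(1)])
    also have "\<dots> \<le> a n * exp (c n)"
      using assms(3)[of n] by (intro mult_left_mono) (auto simp: add.commute exp_ge_add_one_self)
    also have "\<dots> \<le> a n\<^sub>0 * exp (\<Sum>i\<in>{n\<^sub>0..<n}. c i) * exp (c n)"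
      using step.IH by (intro mult_right_mono) auto
    finally show ?case
      using step.hyps by (simp add: exp_add mult.assoc)
  qed simp
  also have "\<dots> \<le> a n\<^sub>0 * exp (suminf c)"
    using assms(2-4) sum_le_suminf[of c "{n\<^sub>0..<n}"] by (intro mult_left_mono) auto
  finally show ?thesis .
qed

lemma set_pmf_sa_step:
  assumes "finite (N x)" and "N x \<noteq> {}"
  shows "set_pmf (sa_step E N \<tau> x) \<subseteq> insert x (N x)"
  using assms unfolding sa_step_def by (auto split: if_splits)

lemma set_pmf_sa_law_subset:
  assumes "V\<^sub>1 \<in> S" and step: "\<And>x j. x \<in> S \<Longrightarrow> set_pmf (sa_step E N (temperature C j) x) \<subseteq> S"
  shows "set_pmf (sa_law E N C V\<^sub>1 n) \<subseteq> S"
proof (induction n)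
  case (Suc n)
  then show ?case
    using step by (cases n) (auto simp: set_bind_pmf)
qed (simp add: assms(1))

section \<open>Metropolis chains on a finite neighbourhood graph\<close>

locale annealing_graph =
  fixes S :: "nat set set" and N :: "nat set \<Rightarrow> nat set set"
  assumes finite_S: "finite S" and S_nonempty: "S \<noteq> {}"
    and N_subset: "x \<in> S \<Longrightarrow> N x \<subseteq> S"
    and N_nonempty: "x \<in> S \<Longrightarrow> N x \<noteq> {}"
    and N_sym: "x \<in> S \<Longrightarrow> y \<in> S \<Longrightarrow> y \<in> N x \<longleftrightarrow> x \<in> N y"
    and N_irrefl: "x \<in> S \<Longrightarrow> x \<notin> N x"
    and connected: "x \<in> S \<Longrightarrow> y \<in> S \<Longrightarrow> (\<lambda>a b. a \<in> S \<and> b \<in> N a)\<^sup>*\<^sup>* x y"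
begin

lemma finite_N: "x \<in> S \<Longrightarrow> finite (N x)"
  using finite_S N_subset finite_subset by blast

lemma set_pmf_sa_step_S: "x \<in> S \<Longrightarrow> set_pmf (sa_step E N \<tau> x) \<subseteq> S"
  using set_pmf_sa_step[of N x] finite_N N_nonempty N_subset by blast

lemma set_pmf_sa_law: "V\<^sub>1 \<in> S \<Longrightarrow> set_pmf (sa_law E N C V\<^sub>1 n) \<subseteq> S"
  by (rule set_pmf_sa_law_subset[OF _ set_pmf_sa_step_S])

lemma prob_sa_law_S: "V\<^sub>1 \<in> S \<Longrightarrow> measure_pmf.prob (sa_law E N C V\<^sub>1 n) S = 1"
  using set_pmf_sa_law by (simp add: measure_pmf.prob_eq_1 AE_measure_pmf_iff subset_iff)

end

locale annealing = annealing_graph +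
  fixes E :: "nat set \<Rightarrow> real" and C :: real
  assumes E_diff_le: "x \<in> S \<Longrightarrow> y \<in> S \<Longrightarrow> E x - E y \<le> C"
    and C_pos: "0 < C"
begin

definition beta :: "nat \<Rightarrow> real" where
  "beta n = ln (real n + 1) / C"

definition P :: "nat \<Rightarrow> nat set \<Rightarrow> nat set \<Rightarrow> real" where
  "P n x y = pmf (sa_step E N (temperature C n) x) y"

definition deg :: "nat set \<Rightarrow> real" where
  "deg x = real (card (N x))"

definition accept :: "nat \<Rightarrow> nat set \<Rightarrow> nat set \<Rightarrow> real" where
  "accept n x y = exp (- beta n * max 0 (E x - E y))"

definition Emax :: real where
  "Emax = Max (E ` S)"

definition gap :: "nat set \<Rightarrow> real" where
  "gap x = Emax - E x"

definition \<pi> :: "nat \<Rightarrow> nat set \<Rightarrow> real" where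
  "\<pi> n x = deg x * exp (- beta n * gap x)"

definition Opt :: "nat set set" where
  "Opt = {x \<in> S. \<forall>w\<in>S. E w \<le> E x}"

lemma beta_nonneg: "0 \<le> beta n"
  using C_pos by (simp add: beta_def)

lemma beta_mono: "beta n \<le> beta (Suc n)"
  using C_pos by (simp add: beta_def divide_right_mono)

lemma exp_beta_C: "exp (beta n * C) = real n + 1"
  using C_pos by (simp add: beta_def)

lemma filterlim_beta: "filterlim beta at_top sequentially"
proof -
  have "beta = (\<lambda>n. inverse C * ln (1 + real n))"
    by (auto simp: beta_def field_simps)
  then show ?thesis
    using C_pos
    by (auto intro!: filterlim_tendsto_pos_mult_at_top[OF tendsto_const] filterlim_compose[OF ln_at_top]
        filterlim_tendsto_add_at_top[OF tendsto_const filterlim_real_sequentially])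
qed

lemma exp_beta_tendsto_0:
  assumes "0 < d"
  shows "(\<lambda>n. exp (- beta n * d)) \<longlonglongrightarrow> 0"
proof -
  have "filterlim (\<lambda>n. d * beta n) at_top sequentially"
    using assms by (intro filterlim_tendsto_pos_mult_at_top[OF tendsto_const _ filterlim_beta])
  then have "filterlim (\<lambda>n. - beta n * d) at_bot sequentially"
    by (simp add: filterlim_uminus_at_top mult.commute)
  then show ?thesis
    by (rule filterlim_compose[OF exp_at_bot])
qed

lemma eventually_exp_beta_le:
  assumes "0 < d" and "0 < t"
  shows "eventually (\<lambda>n. exp (- beta n * d) \<le> t) sequentially"
  using order_tendstoD(2)[OF exp_beta_tendsto_0[OF assms(1)] assms(2)]
  by (auto elim: eventually_mono)

text \<open>This holds for \<open>n = 0\<close> too: both \<open>temperature C 0\<close> and \<open>beta 0\<close> vanish, and \<open>a / 0 = 0\<close>.\<close>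
lemma divide_temperature: "a / temperature C n = beta n * a"
  by (simp add: temperature_def beta_def)

lemma deg_pos: "x \<in> S \<Longrightarrow> 0 < deg x"
  using finite_N N_nonempty by (simp add: deg_def card_gt_0_iff)

lemma deg_le_card: "x \<in> S \<Longrightarrow> deg x \<le> real (card S)"
  using N_subset finite_S by (simp add: deg_def card_mono)

lemma card_S_pos: "0 < real (card S)"
  using finite_S S_nonempty by (simp add: card_gt_0_iff)

lemma accept_pos: "0 < accept n x y"
  by (simp add: accept_def)

lemma accept_le_1: "accept n x y \<le> 1"
  using beta_nonneg by (simp add: accept_def)

lemma sa_step_eq_accept:
  "sa_step E N (temperature C n) x
     = pmf_of_set (N x) \<bind> (\<lambda>U. map_pmf (\<lambda>b. if b then U else x) (bernoulli_pmf (accept n x U)))"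
proof -
  have "bernoulli_pmf 1 = return_pmf True"
    by (rule pmf_eqI) (simp split: split_indicator)
  then show ?thesis
    unfolding sa_step_def
    by (intro bind_pmf_cong refl) (auto simp: accept_def divide_temperature right_diff_distrib)
qed

lemma P_off_diag:
  assumes "x \<in> S" and "y \<noteq> x"
  shows "P n x y = (if y \<in> N x then accept n x y / deg x else 0)"
proof -
  have "pmf (map_pmf (\<lambda>b. if b then U else x) (bernoulli_pmf (accept n x U))) y
          = (if y = U then accept n x U else 0)" if "U \<in> N x" for U
  proof -
    have "U \<noteq> x"
      using that assms(1) N_irrefl by blast
    then have "{b. (if b then U else x) = y} = (if y = U then {True} else {})"
      using assms(2) by auto
    then show ?thesis
      using accept_pos[of n x U] accept_le_1[of n x U]
      by (simp add: pmf_map vimage_def measure_pmf_single)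
  qed
  then show ?thesis
    using assms finite_N N_nonempty
    by (simp add: P_def sa_step_eq_accept pmf_bind_pmf_of_set deg_def sum.delta cong: sum.cong)
qed

lemma P_nonneg: "0 \<le> P n x y"
  by (simp add: P_def)

lemma sum_P_eq_1: "x \<in> S \<Longrightarrow> (\<Sum>y\<in>S. P n x y) = 1"
  unfolding P_def by (rule sum_pmf_eq_1[OF finite_S set_pmf_sa_step_S])

lemma pmf_sa_law_Suc:
  assumes "V\<^sub>1 \<in> S" and "1 \<le> n"
  shows "pmf (sa_law E N C V\<^sub>1 (Suc n)) y = (\<Sum>x\<in>S. pmf (sa_law E N C V\<^sub>1 n) x * P n x y)"
proof -
  obtain j where j: "n = Suc j"
    using assms(2) by (cases n) auto
  have "pmf (sa_law E N C V\<^sub>1 (Suc n)) y = (LINT x|sa_law E N C V\<^sub>1 n. P n x y)"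
    by (simp add: j pmf_bind P_def)
  also have "\<dots> = (\<Sum>x\<in>S. pmf (sa_law E N C V\<^sub>1 n) x * P n x y)"
    using set_pmf_sa_law[OF assms(1)] by (subst integral_measure_pmf[OF finite_S]) auto
  finally show ?thesis .
qed

lemma ex_E_eq_Emax: "\<exists>x\<in>S. E x = Emax"
proof -
  have "Emax \<in> E ` S"
    unfolding Emax_def using finite_S S_nonempty by (intro Max_in) auto
  then show ?thesis by auto
qed

lemma E_le_Emax: "x \<in> S \<Longrightarrow> E x \<le> Emax"
  using finite_S by (simp add: Emax_def)

lemma gap_nonneg: "x \<in> S \<Longrightarrow> 0 \<le> gap x"
  using E_le_Emax by (simp add: gap_def)

lemma gap_le_C: "x \<in> S \<Longrightarrow> gap x \<le> C"
  using ex_E_eq_Emax E_diff_le by (force simp: gap_def)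

lemma mem_Opt_iff: "x \<in> Opt \<longleftrightarrow> x \<in> S \<and> gap x = 0"
  using ex_E_eq_Emax E_le_Emax by (force simp: Opt_def gap_def)

lemma Opt_subset: "Opt \<subseteq> S"
  by (auto simp: Opt_def)

lemma Opt_nonempty: "Opt \<noteq> {}"
  using ex_E_eq_Emax mem_Opt_iff by (force simp: gap_def)

lemma \<pi>_pos: "x \<in> S \<Longrightarrow> 0 < \<pi> n x"
  by (simp add: \<pi>_def deg_pos)

lemma \<pi>_nonneg: "x \<in> S \<Longrightarrow> 0 \<le> \<pi> n x"
  using \<pi>_pos less_imp_le by blast

lemma \<pi>_neq_0: "x \<in> S \<Longrightarrow> \<pi> n x \<noteq> 0"
  using \<pi>_pos[of x n] by simp

lemma \<pi>_P_off_diag: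
  assumes "x \<in> S" and "y \<noteq> x"
  shows "\<pi> n x * P n x y = (if y \<in> N x then exp (- beta n * max (gap x) (gap y)) else 0)"
proof -
  have "exp (- beta n * gap x) * accept n x y = exp (- beta n * max (gap x) (gap y))"
    by (simp add: accept_def gap_def max_def algebra_simps flip: exp_add)
  then show ?thesis
    using assms deg_pos[OF assms(1)] by (simp add: P_off_diag \<pi>_def)
qed

lemma detailed_balance:
  assumes "x \<in> S" and "y \<in> S"
  shows "\<pi> n x * P n x y = \<pi> n y * P n y x"
  using assms N_sym[OF assms] by (cases "x = y") (simp_all add: \<pi>_P_off_diag max.commute)

section \<open>A Poincare inequality along linked paths\<close>

definition lazy :: "nat set \<Rightarrow> bool" where
  "lazy a \<longleftrightarrow> (\<exists>b\<in>N a. gap a < gap b)"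

text \<open>Linked pairs carry weight of order \<open>1/n\<close> in the two-step Dirichlet form: through the
  holding probability of a lazy endpoint (moves to a lower energy are eventually rejected), or through
  a non-lazy common neighbour, from which both moves are always accepted.\<close>
definition linked :: "nat set \<Rightarrow> nat set \<Rightarrow> bool" where
  "linked a b \<longleftrightarrow> (a \<in> S \<and> b \<in> N a \<and> (lazy a \<or> lazy b)) \<or> (\<exists>y\<in>S. \<not> lazy y \<and> a \<in> N y \<and> b \<in> N y)"

lemma linked_step_towards_Opt:
  assumes "x \<in> S" and "x\<^sub>1 \<in> N x" and "((\<lambda>a b. a \<in> S \<and> b \<in> N a) ^^ k) x\<^sub>1 j" and "j \<in> Opt"
  shows "x \<in> Opt \<or> (\<exists>x' k'. k' \<le> k \<and> x' \<in> S \<and> linked x x' \<and> ((\<lambda>a b. a \<in> S \<and> b \<in> N a) ^^ k') x' j)"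
proof -
  let ?G = "\<lambda>a b. a \<in> S \<and> b \<in> N a"
  have "x\<^sub>1 \<in> S" and "x \<in> N x\<^sub>1"
    using assms(1,2) N_subset N_sym by blast+
  consider "lazy x \<or> lazy x\<^sub>1" | "\<not> lazy x\<^sub>1" "k = 0" | k' where "\<not> lazy x\<^sub>1" "k = Suc k'"
    using not0_implies_Suc by blast
  then show ?thesis
  proof cases
    case 1
    then have "linked x x\<^sub>1"
      using assms(1,2) by (auto simp: linked_def)
    then show ?thesis
      using assms(3) \<open>x\<^sub>1 \<in> S\<close> by blast
  next
    case 2
    then have "gap x \<le> gap x\<^sub>1" and "x\<^sub>1 = j"
      using \<open>x \<in> N x\<^sub>1\<close> assms(3) by (auto simp: lazy_def not_less)
    then show ?thesis
      using assms(1,4) gap_nonneg[of x] by (simp add: mem_Opt_iff)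
  next
    case 3
    then obtain x\<^sub>2 where x\<^sub>2: "x\<^sub>2 \<in> N x\<^sub>1" "(?G ^^ k') x\<^sub>2 j"
      using relpowp_Suc_D2[of k' ?G x\<^sub>1 j] assms(3) by auto
    moreover have "linked x x\<^sub>2"
      using 3(1) x\<^sub>2(1) \<open>x\<^sub>1 \<in> S\<close> \<open>x \<in> N x\<^sub>1\<close> by (auto simp: linked_def)
    ultimately show ?thesis
      using 3(2) N_subset[OF \<open>x\<^sub>1 \<in> S\<close>] by (intro disjI2 exI[of _ x\<^sub>2] exI[of _ k']) auto
  qed
qed

lemma linked_path_to_Opt_of_relpowp:
  assumes "((\<lambda>a b. a \<in> S \<and> b \<in> N a) ^^ k) x j" and "x \<in> S" and "j \<in> Opt"
  shows "\<exists>j'\<in>Opt. linked\<^sup>*\<^sup>* x j'"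
  using assms(1,2)
proof (induction k arbitrary: x rule: less_induct)
  case (less k x)
  let ?G = "\<lambda>a b. a \<in> S \<and> b \<in> N a"
  show ?case
  proof (cases k)
    case 0
    then show ?thesis
      using less.prems assms(3) by auto
  next
    case (Suc k')
    then obtain x\<^sub>1 where "x\<^sub>1 \<in> N x" "(?G ^^ k') x\<^sub>1 j"
      using relpowp_Suc_D2[of k' ?G x j] less.prems(1) by auto
    then consider "x \<in> Opt" | x' k'' where "k'' \<le> k'" "x' \<in> S" "linked x x'" "(?G ^^ k'') x' j"
      using linked_step_towards_Opt[OF less.prems(2) _ _ assms(3)] by blast
    then show ?thesis
    proof cases
      case 2
      then obtain j' where "j' \<in> Opt" "linked\<^sup>*\<^sup>* x' j'"
        using less.IH[of k'' x'] Suc by auto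
      then show ?thesis
        using 2(3) by (meson converse_rtranclp_into_rtranclp)
    qed blast
  qed
qed

lemma linked_path_to_Opt:
  assumes "x \<in> S"
  shows "\<exists>j\<in>Opt. linked\<^sup>*\<^sup>* x j"
proof -
  obtain j where j: "j \<in> Opt"
    using Opt_nonempty by blast
  then have "(\<lambda>a b. a \<in> S \<and> b \<in> N a)\<^sup>*\<^sup>* x j"
    using Opt_subset by (intro connected[OF assms]) auto
  then obtain k where "((\<lambda>a b. a \<in> S \<and> b \<in> N a) ^^ k) x j"
    by (blast dest: rtranclp_imp_relpowp)
  then show ?thesis
    using linked_path_to_Opt_of_relpowp[OF _ assms j] by blast
qed

definition dirichlet :: "nat \<Rightarrow> (nat set \<Rightarrow> real) \<Rightarrow> real" where
  "dirichlet n f = (\<Sum>y\<in>S. \<Sum>a\<in>S. \<Sum>b\<in>S. \<pi> n y * P n y a * P n y b * (f a - f b)\<^sup>2) / 2"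

lemma dirichlet_term_nonneg: "y \<in> S \<Longrightarrow> 0 \<le> \<pi> n y * P n y a * P n y b * (f a - f b)\<^sup>2"
  using \<pi>_nonneg[of y n] by (simp add: P_nonneg)

lemma dirichlet_nonneg: "0 \<le> dirichlet n f"
  unfolding dirichlet_def using dirichlet_term_nonneg by (simp add: sum_nonneg)

lemma dirichlet_ge_term:
  assumes "y \<in> S" and "a \<in> S" and "b \<in> S"
  shows "\<pi> n y * P n y a * P n y b * (f a - f b)\<^sup>2 \<le> 2 * dirichlet n f"
proof -
  let ?t = "\<lambda>y a b. \<pi> n y * P n y a * P n y b * (f a - f b)\<^sup>2"
  have "?t y a b \<le> (\<Sum>b\<in>S. ?t y a b)"
    using assms finite_S dirichlet_term_nonneg by (intro member_le_sum) auto
  also have "\<dots> \<le> (\<Sum>a\<in>S. \<Sum>b\<in>S. ?t y a b)"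
    using assms finite_S dirichlet_term_nonneg by (intro member_le_sum[of a] sum_nonneg) auto
  also have "\<dots> \<le> (\<Sum>y\<in>S. \<Sum>a\<in>S. \<Sum>b\<in>S. ?t y a b)"
    using assms finite_S dirichlet_term_nonneg by (intro member_le_sum[of y] sum_nonneg) auto
  finally show ?thesis
    by (simp add: dirichlet_def)
qed

lemma exp_gap_ge:
  assumes "x \<in> S"
  shows "1 / (real n + 1) \<le> exp (- beta n * gap x)"
proof -
  have "exp (- beta n * C) = 1 / (real n + 1)"
    using exp_beta_C[of n] by (simp add: exp_minus inverse_eq_divide)
  moreover have "exp (- beta n * C) \<le> exp (- beta n * gap x)"
    using gap_le_C[OF assms] beta_nonneg[of n] by (simp add: mult_left_mono)
  ultimately show ?thesis by simp
qed

lemma weight_edge: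
  assumes "a \<in> S" and "b \<in> N a"
  shows "1 / (real n + 1) \<le> \<pi> n a * P n a b"
proof -
  have "b \<noteq> a" and "b \<in> S"
    using assms N_irrefl N_subset by blast+
  then show ?thesis
    using assms exp_gap_ge[of a n] exp_gap_ge[of b n]
    by (simp add: \<pi>_P_off_diag max_def)
qed

lemma weight_nonlazy:
  assumes "y \<in> S" and "\<not> lazy y" and "a \<in> N y" and "b \<in> N y"
  shows "1 / (real (card S) * (real n + 1)) \<le> \<pi> n y * P n y a * P n y b"
proof -
  have "a \<noteq> y" "b \<noteq> y" "gap a \<le> gap y" "gap b \<le> gap y"
    using assms N_irrefl by (auto simp: lazy_def not_less)
  then have "\<pi> n y * P n y a = exp (- beta n * gap y)" and "P n y b = 1 / deg y"
    using assms(1,3,4) \<pi>_P_off_diag[of y a n] P_off_diag[of y b n]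
    by (simp_all add: accept_def gap_def max_def)
  then have "\<pi> n y * P n y a * P n y b = exp (- beta n * gap y) / deg y"
    by simp
  moreover have "1 / (real n + 1) / real (card S) \<le> exp (- beta n * gap y) / deg y"
    using exp_gap_ge[OF assms(1), of n] deg_pos[OF assms(1)] deg_le_card[OF assms(1)]
    by (intro frac_le) auto
  ultimately show ?thesis
    by (simp add: mult.commute)
qed

lemma P_diag_ge:
  assumes "a \<in> S" and "z \<in> N a"
  shows "(1 - accept n a z) / deg a \<le> P n a a"
proof -
  have "(\<Sum>y\<in>S - {a}. P n a y) = (\<Sum>y\<in>S - {a}. if y \<in> N a then accept n a y / deg a else 0)"
    using assms(1) by (intro sum.cong) (auto simp: P_off_diag)
  also have "\<dots> = (\<Sum>y\<in>N a. accept n a y) / deg a"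
  proof -
    have "(S - {a}) \<inter> N a = N a"
      using N_subset[OF assms(1)] N_irrefl[OF assms(1)] by blast
    then show ?thesis
      using sum.inter_restrict[of "S - {a}" "\<lambda>y. accept n a y / deg a" "N a"] finite_S
      by (simp add: sum_divide_distrib)
  qed
  also have "(\<Sum>y\<in>N a. accept n a y) \<le> accept n a z + (deg a - 1)"
  proof -
    have "1 \<le> card (N a)"
      using finite_N[OF assms(1)] assms(2) by (auto simp: Suc_le_eq card_gt_0_iff)
    then have "(\<Sum>y\<in>N a - {z}. accept n a y) \<le> deg a - 1"
      using sum_mono[of "N a - {z}" "accept n a" "\<lambda>_. 1"] accept_le_1 assms(2) finite_N[OF assms(1)]
      by (simp add: deg_def card_Diff_singleton of_nat_diff)
    then show ?thesis
      using sum.remove[OF finite_N[OF assms(1)] assms(2), of "accept n a"] by simp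
  qed
  finally have "(\<Sum>y\<in>S - {a}. P n a y) \<le> (accept n a z + (deg a - 1)) / deg a"
    using deg_pos[OF assms(1)] by (simp add: divide_right_mono)
  moreover have "1 = P n a a + (\<Sum>y\<in>S - {a}. P n a y)"
    using sum_P_eq_1[OF assms(1), of n] sum.remove[OF finite_S assms(1), of "P n a"] by simp
  moreover have "(1 - accept n a z) / deg a = 1 - (accept n a z + (deg a - 1)) / deg a"
    using deg_pos[OF assms(1)] by (simp add: field_simps)
  ultimately show ?thesis
    by linarith
qed

lemma weight_lazy:
  assumes "a \<in> S" and "lazy a" and "b \<in> N a"
  shows "eventually (\<lambda>n. 1 / (2 * real (card S) * (real n + 1)) \<le> \<pi> n a * P n a a * P n a b)
           sequentially"
proof -
  obtain z where z: "z \<in> N a" "gap a < gap z"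
    using assms(2) by (auto simp: lazy_def)
  have "eventually (\<lambda>n. exp (- beta n * (gap z - gap a)) \<le> 1 / 2) sequentially"
    using z(2) by (intro eventually_exp_beta_le) auto
  then show ?thesis
  proof (rule eventually_mono)
    fix n
    assume small: "exp (- beta n * (gap z - gap a)) \<le> 1 / 2"
    have "accept n a z = exp (- beta n * (gap z - gap a))"
      using z(2) by (simp add: accept_def gap_def)
    then have "1 / 2 / deg a \<le> (1 - accept n a z) / deg a"
      using small deg_pos[OF assms(1)] by (intro divide_right_mono) auto
    then have "1 / 2 / deg a \<le> P n a a"
      using P_diag_ge[OF assms(1) z(1), of n] by linarith
    moreover have "1 / 2 / real (card S) \<le> 1 / 2 / deg a"
      using deg_pos[OF assms(1)] deg_le_card[OF assms(1)] by (intro divide_left_mono) auto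
    ultimately have "1 / (2 * real (card S)) \<le> P n a a"
      by simp
    from mult_mono[OF weight_edge[OF assms(1,3), of n] this]
    show "1 / (2 * real (card S) * (real n + 1)) \<le> \<pi> n a * P n a a * P n a b"
      using \<pi>_pos[OF assms(1), of n] by (simp add: P_nonneg mult_ac)
  qed
qed

lemma linked_weight:
  assumes "linked a b"
  shows "eventually (\<lambda>n. \<exists>y\<in>S. 1 / (2 * real (card S) * (real n + 1)) \<le> \<pi> n y * P n y a * P n y b)
           sequentially"
proof -
  consider "a \<in> S" "b \<in> N a" "lazy a" | "b \<in> S" "a \<in> N b" "lazy b"
    | y where "y \<in> S" "\<not> lazy y" "a \<in> N y" "b \<in> N y"
    using assms N_subset N_sym unfolding linked_def by blast
  then show ?thesis
  proof cases
    case 1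
    then show ?thesis
      using weight_lazy[of a b] by (auto elim: eventually_mono)
  next
    case 2
    then show ?thesis
      using weight_lazy[of b a] by (auto elim!: eventually_mono simp: mult_ac)
  next
    case 3
    have "1 / (2 * real (card S) * (real n + 1)) \<le> 1 / (real (card S) * (real n + 1))" for n
      using card_S_pos by (intro divide_left_mono) auto
    then have "1 / (2 * real (card S) * (real n + 1)) \<le> \<pi> n y * P n y a * P n y b" for n
      using weight_nonlazy[OF 3, of n] order_trans by blast
    then show ?thesis
      using 3(1) by (blast intro: always_eventually)
  qed
qed

lemma linked_diff_sq_le:
  assumes "linked a b"
  shows "eventually (\<lambda>n. \<forall>f. (f a - f b)\<^sup>2 \<le> 4 * real (card S) * ((real n + 1) * dirichlet n f))
           sequentially"
proof (rule eventually_mono[OF linked_weight[OF assms]], safe)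
  fix n f y
  assume "y \<in> S" and w: "1 / (2 * real (card S) * (real n + 1)) \<le> \<pi> n y * P n y a * P n y b"
  have "a \<in> S" "b \<in> S"
    using assms N_subset by (auto simp: linked_def)
  define c where "c = 2 * real (card S) * (real n + 1)"
  have "0 < c"
    using card_S_pos by (simp add: c_def)
  have "1 / c * (f a - f b)\<^sup>2 \<le> 2 * dirichlet n f"
    using mult_right_mono[OF w zero_le_power2[of "f a - f b"]] \<open>a \<in> S\<close> \<open>b \<in> S\<close>
      dirichlet_ge_term[OF \<open>y \<in> S\<close>, of a b n f] by (simp add: c_def)
  then have "(f a - f b)\<^sup>2 \<le> 2 * dirichlet n f * c"
    using \<open>0 < c\<close> by (simp add: pos_divide_le_eq)
  then show "(f a - f b)\<^sup>2 \<le> 4 * real (card S) * ((real n + 1) * dirichlet n f)"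
    by (simp add: c_def algebra_simps)
qed

lemma linked_path_diff_sq_le:
  assumes "linked\<^sup>*\<^sup>* x z"
  shows "\<exists>l. eventually (\<lambda>n. \<forall>f. (f x - f z)\<^sup>2 \<le> l * ((real n + 1) * dirichlet n f)) sequentially"
  using assms
proof (induction rule: rtranclp_induct)
  case (step y z)
  obtain l where path: "eventually (\<lambda>n. \<forall>f. (f x - f y)\<^sup>2 \<le> l * ((real n + 1) * dirichlet n f))
      sequentially"
    using step.IH by blast
  have "eventually (\<lambda>n. \<forall>f. (f x - f z)\<^sup>2 \<le> (2 * l + 8 * real (card S)) * ((real n + 1) * dirichlet n f))
      sequentially"
    using path linked_diff_sq_le[OF step.hyps(2)]
  proof eventually_elim
    case (elim n)
    show ?case
    proof
      fix f :: "nat set \<Rightarrow> real"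
      have "(f x - f z)\<^sup>2 \<le> 2 * (f x - f y)\<^sup>2 + 2 * (f y - f z)\<^sup>2"
        using zero_le_power2[of "f x - 2 * f y + f z"] by (simp add: power2_eq_square algebra_simps)
      then show "(f x - f z)\<^sup>2 \<le> (2 * l + 8 * real (card S)) * ((real n + 1) * dirichlet n f)"
        using elim[THEN spec, of f] by (simp add: algebra_simps)
    qed
  qed
  then show ?case
    by blast
qed (auto intro: exI[of _ 0])

definition eta :: real where
  "eta = Min (gap ` (S - Opt))"

lemma eta_le_gap: "x \<in> S - Opt \<Longrightarrow> eta \<le> gap x"
  using finite_S by (simp add: eta_def)

lemma eta_pos: "S - Opt \<noteq> {} \<Longrightarrow> 0 < eta"
  using finite_S gap_nonneg by (force simp: eta_def Min_gr_iff mem_Opt_iff)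

lemma exp_gap_le_eta: "x \<in> S - Opt \<Longrightarrow> exp (- beta n * gap x) \<le> exp (- beta n * eta)"
  using eta_le_gap[of x] beta_nonneg[of n] by (simp add: mult_left_mono)

definition sqnorm :: "nat \<Rightarrow> (nat set \<Rightarrow> real) \<Rightarrow> real" where
  "sqnorm n f = (\<Sum>y\<in>S. \<pi> n y * (f y)\<^sup>2)"

lemma sqnorm_ge_term: "y \<in> S \<Longrightarrow> \<pi> n y * (f y)\<^sup>2 \<le> sqnorm n f"
  unfolding sqnorm_def using finite_S
  by (intro member_le_sum) (auto intro!: mult_nonneg_nonneg \<pi>_nonneg)

lemma sqnorm_nonneg: "0 \<le> sqnorm n f"
  unfolding sqnorm_def by (auto intro!: sum_nonneg mult_nonneg_nonneg \<pi>_nonneg)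

lemma sq_le_sqnorm_Opt:
  assumes "j \<in> Opt"
  shows "(f j)\<^sup>2 \<le> sqnorm n f"
proof -
  have "j \<in> S" and "1 \<le> \<pi> n j"
    using assms finite_N N_nonempty
    by (auto simp: mem_Opt_iff \<pi>_def deg_def Suc_le_eq card_gt_0_iff)
  then show ?thesis
    using sqnorm_ge_term[of j n f] mult_right_mono[OF \<open>1 \<le> \<pi> n j\<close> zero_le_power2[of "f j"]]
    by linarith
qed

lemma \<pi>_le: "x \<in> S \<Longrightarrow> \<pi> n x \<le> real (card S) * exp (- beta n * gap x)"
  unfolding \<pi>_def using deg_le_card by (simp add: mult_right_mono)

lemma \<pi>_le_nonopt:
  assumes "x \<in> S - Opt"
  shows "\<pi> n x \<le> real (card S) * exp (- beta n * eta)"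
  using assms \<pi>_le[of x n] mult_left_mono[OF exp_gap_le_eta[OF assms, of n], of "real (card S)"]
  by simp

lemma \<pi>_sq_le_via_Opt:
  assumes x: "x \<in> S - Opt" and j: "j \<in> Opt"
    and path: "(f x - f j)\<^sup>2 \<le> l * ((real n + 1) * dirichlet n f)"
    and small: "2 * real (card S) * l * exp (- beta n * gap x) \<le> 1 / real (card S)"
  shows "\<pi> n x * (f x)\<^sup>2 \<le> (real n + 1) / real (card S) * dirichlet n f
           + 2 * real (card S) * exp (- beta n * eta) * sqnorm n f"
proof -
  let ?R = "(real n + 1) * dirichlet n f"
  have "\<pi> n x * (2 * (f x - f j)\<^sup>2) \<le> real (card S) * exp (- beta n * gap x) * (2 * (l * ?R))"
    using \<pi>_le[of x n] x path by (intro mult_mono) auto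
  also have "\<dots> = (2 * real (card S) * l * exp (- beta n * gap x)) * ?R"
    by (simp add: algebra_simps)
  also have "\<dots> \<le> 1 / real (card S) * ?R"
    using small dirichlet_nonneg[of n f] by (intro mult_right_mono) auto
  finally have "\<pi> n x * (2 * (f x - f j)\<^sup>2) \<le> 1 / real (card S) * ?R" .
  moreover have "\<pi> n x * (2 * (f j)\<^sup>2) \<le> real (card S) * exp (- beta n * eta) * (2 * sqnorm n f)"
    using \<pi>_le_nonopt[OF x] sq_le_sqnorm_Opt[OF j, of f n] by (intro mult_mono) auto
  moreover have "\<pi> n x * (f x)\<^sup>2 \<le> \<pi> n x * (2 * (f x - f j)\<^sup>2 + 2 * (f j)\<^sup>2)"
    using zero_le_power2[of "f x - 2 * f j"] \<pi>_nonneg[of x n] x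
    by (intro mult_left_mono) (auto simp: power2_eq_square algebra_simps)
  ultimately show ?thesis
    by (simp add: distrib_left mult_ac)
qed

lemma poincare_point:
  assumes x: "x \<in> S - Opt"
  shows "eventually (\<lambda>n. \<forall>f. \<pi> n x * (f x)\<^sup>2 \<le> (real n + 1) / real (card S) * dirichlet n f
            + 2 * real (card S) * exp (- beta n * eta) * sqnorm n f) sequentially"
proof -
  obtain j where j: "j \<in> Opt" "linked\<^sup>*\<^sup>* x j"
    using linked_path_to_Opt x by blast
  then obtain l where path: "eventually (\<lambda>n. \<forall>f. (f x - f j)\<^sup>2 \<le> l * ((real n + 1) * dirichlet n f))
      sequentially"
    using linked_path_diff_sq_le by blast
  have "0 < gap x"
    using x gap_nonneg[of x] by (auto simp: mem_Opt_iff)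
  then have "(\<lambda>n. 2 * real (card S) * l * exp (- beta n * gap x)) \<longlonglongrightarrow> 0"
    by (intro tendsto_mult_right_zero exp_beta_tendsto_0)
  then have "eventually (\<lambda>n. 2 * real (card S) * l * exp (- beta n * gap x) < 1 / real (card S))
      sequentially"
    using card_S_pos by (intro order_tendstoD(2)) auto
  with path show ?thesis
    by eventually_elim (use x j(1) \<pi>_sq_le_via_Opt less_imp_le in blast)
qed

lemma poincare:
  "eventually (\<lambda>n. \<forall>f. (\<Sum>x\<in>S - Opt. \<pi> n x * (f x)\<^sup>2)
     \<le> (real n + 1) * dirichlet n f + 2 * (real (card S))\<^sup>2 * exp (- beta n * eta) * sqnorm n f)
   sequentially"
proof -
  have "eventually (\<lambda>n. \<forall>x\<in>S - Opt. \<forall>f. \<pi> n x * (f x)\<^sup>2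
      \<le> (real n + 1) / real (card S) * dirichlet n f + 2 * real (card S) * exp (- beta n * eta) * sqnorm n f)
    sequentially"
    using finite_S poincare_point by (intro eventually_ball_finite) auto
  then show ?thesis
  proof (rule eventually_mono, intro allI)
    fix n f
    let ?B = "\<lambda>f. (real n + 1) / real (card S) * dirichlet n f
      + 2 * real (card S) * exp (- beta n * eta) * sqnorm n f"
    assume "\<forall>x\<in>S - Opt. \<forall>f. \<pi> n x * (f x)\<^sup>2 \<le> ?B f"
    then have "(\<Sum>x\<in>S - Opt. \<pi> n x * (f x)\<^sup>2) \<le> real (card (S - Opt)) * ?B f"
      using sum_mono[of "S - Opt" "\<lambda>x. \<pi> n x * (f x)\<^sup>2" "\<lambda>_. ?B f"] by auto
    also have "\<dots> \<le> real (card S) * ?B f"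
      using finite_S card_S_pos dirichlet_nonneg[of n f] sqnorm_nonneg[of n f]
      by (intro mult_right_mono) (auto simp: card_mono)
    also have "\<dots> = (real n + 1) * dirichlet n f + 2 * (real (card S))\<^sup>2 * exp (- beta n * eta) * sqnorm n f"
      using card_S_pos by (simp add: field_simps power2_eq_square)
    finally show "(\<Sum>x\<in>S - Opt. \<pi> n x * (f x)\<^sup>2)
      \<le> (real n + 1) * dirichlet n f + 2 * (real (card S))\<^sup>2 * exp (- beta n * eta) * sqnorm n f" .
  qed
qed

section \<open>Convergence to the maximisers\<close>

lemma sum_P_Opt_to_nonopt_le:
  assumes "a \<in> Opt"
  shows "(\<Sum>y\<in>S - Opt. P n a y) \<le> exp (- beta n * eta)"
proof -
  have "a \<in> S" and "gap a = 0"
    using assms by (auto simp: mem_Opt_iff)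
  let ?g = "\<lambda>y. if y \<in> N a then exp (- beta n * eta) / deg a else 0"
  have "P n a y \<le> ?g y" if "y \<in> S - Opt" for y
  proof -
    have "accept n a y = exp (- beta n * gap y)"
      using \<open>gap a = 0\<close> gap_nonneg[of y] that by (simp add: accept_def gap_def)
    moreover have "y \<noteq> a"
      using that assms by blast
    ultimately show ?thesis
      using P_off_diag[OF \<open>a \<in> S\<close>, of y n] exp_gap_le_eta[OF that, of n] deg_pos[OF \<open>a \<in> S\<close>]
      by (auto intro: divide_right_mono)
  qed
  then have "(\<Sum>y\<in>S - Opt. P n a y) \<le> (\<Sum>y\<in>S - Opt. ?g y)"
    by (rule sum_mono)
  also have "\<dots> \<le> (\<Sum>y\<in>S. ?g y)"
    using finite_S deg_pos[OF \<open>a \<in> S\<close>] by (intro sum_mono2) auto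
  also have "\<dots> = (\<Sum>y\<in>N a. exp (- beta n * eta) / deg a)"
    using sum.inter_restrict[OF finite_S, of "\<lambda>_. exp (- beta n * eta) / deg a" "N a"]
      N_subset[OF \<open>a \<in> S\<close>] by (simp add: Int_absorb1)
  also have "\<dots> = exp (- beta n * eta)"
    using deg_pos[OF \<open>a \<in> S\<close>] by (simp add: deg_def)
  finally show ?thesis .
qed

lemma sum_nonopt_mean_sq_le:
  "(\<Sum>y\<in>S - Opt. \<pi> n y * (\<Sum>a\<in>S. P n y a * f a)\<^sup>2)
     \<le> (\<Sum>a\<in>S - Opt. \<pi> n a * (f a)\<^sup>2) + exp (- beta n * eta) * sqnorm n f"
proof -
  let ?Q = "\<lambda>a. \<Sum>y\<in>S - Opt. P n a y"
  have "(\<Sum>y\<in>S - Opt. \<pi> n y * (\<Sum>a\<in>S. P n y a * f a)\<^sup>2)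
      \<le> (\<Sum>y\<in>S - Opt. \<pi> n y * (\<Sum>a\<in>S. P n y a * (f a)\<^sup>2))"
    using finite_S sum_P_eq_1 P_nonneg \<pi>_nonneg
    by (intro sum_mono mult_left_mono weighted_mean_square_le) auto
  also have "\<dots> = (\<Sum>a\<in>S. \<Sum>y\<in>S - Opt. \<pi> n y * P n y a * (f a)\<^sup>2)"
    by (subst sum.swap) (simp add: sum_distrib_left mult.assoc)
  also have "\<dots> = (\<Sum>a\<in>S. \<Sum>y\<in>S - Opt. \<pi> n a * P n a y * (f a)\<^sup>2)"
    by (intro sum.cong refl, subst detailed_balance) auto
  also have "\<dots> = (\<Sum>a\<in>S. \<pi> n a * (f a)\<^sup>2 * ?Q a)"
    by (simp add: sum_distrib_left mult_ac)
  also have "\<dots> = (\<Sum>a\<in>S - Opt. \<pi> n a * (f a)\<^sup>2 * ?Q a) + (\<Sum>a\<in>Opt. \<pi> n a * (f a)\<^sup>2 * ?Q a)"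
    by (rule sum.subset_diff[OF Opt_subset finite_S])
  also have "\<dots> \<le> (\<Sum>a\<in>S - Opt. \<pi> n a * (f a)\<^sup>2) + (\<Sum>a\<in>Opt. \<pi> n a * (f a)\<^sup>2 * exp (- beta n * eta))"
  proof (intro add_mono sum_mono)
    fix a
    assume "a \<in> S - Opt"
    then have "?Q a \<le> 1"
      using sum_mono2[OF finite_S, of "S - Opt" "P n a"] P_nonneg sum_P_eq_1[of a n] by auto
    then show "\<pi> n a * (f a)\<^sup>2 * ?Q a \<le> \<pi> n a * (f a)\<^sup>2"
      using \<pi>_nonneg[of a n] \<open>a \<in> S - Opt\<close> by (simp add: mult_left_le)
  next
    fix a
    assume "a \<in> Opt"
    then show "\<pi> n a * (f a)\<^sup>2 * ?Q a \<le> \<pi> n a * (f a)\<^sup>2 * exp (- beta n * eta)"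
      using sum_P_Opt_to_nonopt_le[of a n] \<pi>_nonneg[of a n] Opt_subset
      by (intro mult_left_mono) auto
  qed
  also have "(\<Sum>a\<in>Opt. \<pi> n a * (f a)\<^sup>2 * exp (- beta n * eta))
      = exp (- beta n * eta) * (\<Sum>a\<in>Opt. \<pi> n a * (f a)\<^sup>2)"
    by (simp add: sum_distrib_left mult_ac)
  also have "\<dots> \<le> exp (- beta n * eta) * sqnorm n f"
    unfolding sqnorm_def using Opt_subset finite_S \<pi>_nonneg
    by (intro mult_left_mono sum_mono2) auto
  finally show ?thesis by simp
qed

lemma \<pi>_Opt: "y \<in> Opt \<Longrightarrow> \<pi> n y = deg y"
  by (simp add: \<pi>_def mem_Opt_iff)

lemma \<pi>_ratio_le:
  assumes "y \<in> S"
  shows "\<pi> n y / \<pi> (Suc n) y \<le> 1 + 1 / (real n + 1)"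
proof -
  have "\<pi> n y / \<pi> (Suc n) y = exp ((beta (Suc n) - beta n) * gap y)"
    using deg_pos[OF assms] by (simp add: \<pi>_def algebra_simps flip: exp_diff)
  also have "\<dots> \<le> exp ((beta (Suc n) - beta n) * C)"
    using gap_le_C[OF assms] beta_mono[of n] by (simp add: mult_left_mono)
  also have "\<dots> = (real n + 2) / (real n + 1)"
    by (simp add: left_diff_distrib exp_diff exp_beta_C)
  also have "\<dots> = 1 + 1 / (real n + 1)"
    by (simp add: field_simps)
  finally show ?thesis .
qed

lemma sum_\<pi>_ratio_le:
  assumes "\<And>y. y \<in> S \<Longrightarrow> 0 \<le> T y"
  shows "(\<Sum>y\<in>S. \<pi> n y / \<pi> (Suc n) y * T y) \<le> (\<Sum>y\<in>S. T y) + (\<Sum>y\<in>S - Opt. T y) / (real n + 1)"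
proof -
  have "(\<Sum>y\<in>S. \<pi> n y / \<pi> (Suc n) y * T y)
      = (\<Sum>y\<in>S - Opt. \<pi> n y / \<pi> (Suc n) y * T y) + (\<Sum>y\<in>Opt. \<pi> n y / \<pi> (Suc n) y * T y)"
    by (rule sum.subset_diff[OF Opt_subset finite_S])
  also have "\<dots> \<le> (\<Sum>y\<in>S - Opt. (1 + 1 / (real n + 1)) * T y) + (\<Sum>y\<in>Opt. T y)"
    using assms \<pi>_ratio_le Opt_subset deg_pos
    by (intro add_mono sum_mono mult_right_mono) (auto simp: \<pi>_Opt)
  also have "\<dots> = (\<Sum>y\<in>S. T y) + (\<Sum>y\<in>S - Opt. T y) / (real n + 1)"
    by (simp add: algebra_simps sum.distrib sum_divide_distrib sum.subset_diff[OF Opt_subset finite_S, of T])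
  finally show ?thesis .
qed

lemma sqnorm_step_le:
  "eventually (\<lambda>n. \<forall>f. (\<Sum>y\<in>S. \<pi> n y / \<pi> (Suc n) y * (\<pi> n y * (\<Sum>a\<in>S. P n y a * f a)\<^sup>2))
      \<le> sqnorm n f * (1 + (2 * (real (card S))\<^sup>2 + 1) * exp (- beta n * eta) / (real n + 1)))
   sequentially"
proof (rule eventually_mono[OF poincare], intro allI)
  fix n f
  let ?T = "\<lambda>y. \<pi> n y * (\<Sum>a\<in>S. P n y a * f a)\<^sup>2"
  let ?k = "2 * (real (card S))\<^sup>2"
  let ?e = "exp (- beta n * eta)"
  assume "\<forall>f. (\<Sum>x\<in>S - Opt. \<pi> n x * (f x)\<^sup>2) \<le> (real n + 1) * dirichlet n f + ?k * ?e * sqnorm n f"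
  from spec[OF this, of f] have "(\<Sum>y\<in>S - Opt. ?T y) \<le> (real n + 1) * dirichlet n f + ?k * ?e * sqnorm n f + ?e * sqnorm n f"
    using sum_nonopt_mean_sq_le[of n f] by linarith
  then have "(\<Sum>y\<in>S - Opt. ?T y) \<le> (real n + 1) * dirichlet n f + (?k + 1) * ?e * sqnorm n f"
    by (simp add: algebra_simps)
  then have "(\<Sum>y\<in>S - Opt. ?T y) / (real n + 1)
      \<le> ((real n + 1) * dirichlet n f + (?k + 1) * ?e * sqnorm n f) / (real n + 1)"
    by (rule divide_right_mono) simp
  also have "\<dots> = dirichlet n f + (?k + 1) * ?e * sqnorm n f / (real n + 1)"
    by (simp add: add_divide_distrib)
  finally have "(\<Sum>y\<in>S - Opt. ?T y) / (real n + 1)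
      \<le> dirichlet n f + (?k + 1) * ?e * sqnorm n f / (real n + 1)" .
  moreover have "(\<Sum>y\<in>S. ?T y) = sqnorm n f - dirichlet n f"
    using reversible_mean_square_eq[OF finite_S sum_P_eq_1 detailed_balance]
    by (simp add: sqnorm_def dirichlet_def)
  moreover have "(\<Sum>y\<in>S. \<pi> n y / \<pi> (Suc n) y * ?T y) \<le> (\<Sum>y\<in>S. ?T y) + (\<Sum>y\<in>S - Opt. ?T y) / (real n + 1)"
    using \<pi>_nonneg by (intro sum_\<pi>_ratio_le) auto
  ultimately show "(\<Sum>y\<in>S. \<pi> n y / \<pi> (Suc n) y * ?T y)
      \<le> sqnorm n f * (1 + (?k + 1) * ?e / (real n + 1))"
    by (simp add: algebra_simps)
qed

definition dens :: "nat set \<Rightarrow> nat \<Rightarrow> nat set \<Rightarrow> real" where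
  "dens V\<^sub>1 n x = pmf (sa_law E N C V\<^sub>1 n) x / \<pi> n x"

lemma pmf_sa_law_Suc_eq_dens:
  assumes "V\<^sub>1 \<in> S" and "1 \<le> n" and "y \<in> S"
  shows "pmf (sa_law E N C V\<^sub>1 (Suc n)) y = \<pi> n y * (\<Sum>a\<in>S. P n y a * dens V\<^sub>1 n a)"
proof -
  have "pmf (sa_law E N C V\<^sub>1 (Suc n)) y = (\<Sum>x\<in>S. dens V\<^sub>1 n x * (\<pi> n x * P n x y))"
    using pmf_sa_law_Suc[OF assms(1,2)] by (simp add: dens_def \<pi>_neq_0 cong: sum.cong)
  also have "\<dots> = (\<Sum>x\<in>S. dens V\<^sub>1 n x * (\<pi> n y * P n y x))"
    using assms(3) by (intro sum.cong refl) (simp add: detailed_balance)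
  also have "\<dots> = \<pi> n y * (\<Sum>a\<in>S. P n y a * dens V\<^sub>1 n a)"
    by (simp add: sum_distrib_left mult_ac)
  finally show ?thesis .
qed

lemma sqnorm_dens_Suc_le:
  assumes "V\<^sub>1 \<in> S"
  shows "eventually (\<lambda>n. sqnorm (Suc n) (dens V\<^sub>1 (Suc n))
      \<le> sqnorm n (dens V\<^sub>1 n) * (1 + (2 * (real (card S))\<^sup>2 + 1) * exp (- beta n * eta) / (real n + 1)))
    sequentially"
  using sqnorm_step_le eventually_ge_at_top[of 1]
proof eventually_elim
  case (elim n)
  have "sqnorm (Suc n) (dens V\<^sub>1 (Suc n))
      = (\<Sum>y\<in>S. \<pi> n y / \<pi> (Suc n) y * (\<pi> n y * (\<Sum>a\<in>S. P n y a * dens V\<^sub>1 n a)\<^sup>2))"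
    unfolding sqnorm_def
  proof (intro sum.cong refl)
    fix y
    assume "y \<in> S"
    then show "\<pi> (Suc n) y * (dens V\<^sub>1 (Suc n) y)\<^sup>2
        = \<pi> n y / \<pi> (Suc n) y * (\<pi> n y * (\<Sum>a\<in>S. P n y a * dens V\<^sub>1 n a)\<^sup>2)"
      using pmf_sa_law_Suc_eq_dens[OF assms elim(2)] \<pi>_pos[of y "Suc n"]
      by (simp add: dens_def power2_eq_square)
  qed
  then show ?case
    using elim(1) by simp
qed

lemma summable_exp_beta_div:
  assumes "0 < d"
  shows "summable (\<lambda>n. exp (- beta n * d) / (real n + 1))"
proof -
  define s where "s = - d / C - 1"
  have "exp (- beta n * d) / (real n + 1) = (real n + 1) powr s" for n
  proof -
    have "(real n + 1) powr s = exp (- beta n * d) * exp (- ln (real n + 1))"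
      using C_pos by (simp add: powr_def s_def beta_def field_simps flip: exp_add)
    then show ?thesis
      by (simp add: exp_minus inverse_eq_divide)
  qed
  moreover have "summable (\<lambda>n. real (Suc n) powr s)"
    using assms C_pos summable_real_powr_iff[of s]
    by (subst summable_Suc_iff) (simp add: s_def)
  ultimately show ?thesis
    by (simp add: add.commute)
qed

lemma prob_Opt_eq:
  assumes "V\<^sub>1 \<in> S"
  shows "measure_pmf.prob (sa_law E N C V\<^sub>1 n) Opt = 1 - (\<Sum>x\<in>S - Opt. pmf (sa_law E N C V\<^sub>1 n) x)"
proof -
  have "finite Opt"
    using finite_S Opt_subset finite_subset by blast
  have "1 = (\<Sum>x\<in>S. pmf (sa_law E N C V\<^sub>1 n) x)"
    using sum_pmf_eq_1[OF finite_S set_pmf_sa_law[OF assms]] by simp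
  also have "\<dots> = (\<Sum>x\<in>S - Opt. pmf (sa_law E N C V\<^sub>1 n) x) + (\<Sum>x\<in>Opt. pmf (sa_law E N C V\<^sub>1 n) x)"
    by (rule sum.subset_diff[OF Opt_subset finite_S])
  finally show ?thesis
    by (simp add: measure_measure_pmf_finite[OF \<open>finite Opt\<close>])
qed

lemma sum_\<pi>_nonopt_le: "(\<Sum>x\<in>S - Opt. \<pi> n x) \<le> (real (card S))\<^sup>2 * exp (- beta n * eta)"
proof -
  have "(\<Sum>x\<in>S - Opt. \<pi> n x) \<le> (\<Sum>x\<in>S - Opt. real (card S) * exp (- beta n * eta))"
    using \<pi>_le_nonopt by (rule sum_mono)
  also have "\<dots> \<le> real (card S) * (real (card S) * exp (- beta n * eta))"
    using finite_S by (simp add: card_mono mult_right_mono)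
  finally show ?thesis
    by (simp add: power2_eq_square)
qed

lemma nonopt_mass_sq_le:
  assumes "V\<^sub>1 \<in> S"
  shows "(\<Sum>x\<in>S - Opt. pmf (sa_law E N C V\<^sub>1 n) x)\<^sup>2
           \<le> (real (card S))\<^sup>2 * exp (- beta n * eta) * sqnorm n (dens V\<^sub>1 n)"
proof -
  let ?\<mu> = "pmf (sa_law E N C V\<^sub>1 n)"
  have "(\<Sum>x\<in>S - Opt. ?\<mu> x)\<^sup>2 = (\<Sum>x\<in>S - Opt. sqrt (\<pi> n x) * (?\<mu> x / sqrt (\<pi> n x)))\<^sup>2"
    by (intro arg_cong[where f = "\<lambda>t. t\<^sup>2"] sum.cong) (auto simp: \<pi>_neq_0)
  also have "\<dots> \<le> (\<Sum>x\<in>S - Opt. (sqrt (\<pi> n x))\<^sup>2) * (\<Sum>x\<in>S - Opt. (?\<mu> x / sqrt (\<pi> n x))\<^sup>2)"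
    by (rule Cauchy_Schwarz_ineq_sum)
  also have "\<dots> = (\<Sum>x\<in>S - Opt. \<pi> n x) * (\<Sum>x\<in>S - Opt. \<pi> n x * (dens V\<^sub>1 n x)\<^sup>2)"
    by (intro arg_cong2[where f = "(*)"] sum.cong refl)
      (auto simp: dens_def power_divide \<pi>_nonneg \<pi>_neq_0 power2_eq_square)
  also have "\<dots> \<le> (real (card S))\<^sup>2 * exp (- beta n * eta) * sqnorm n (dens V\<^sub>1 n)"
  proof (rule mult_mono[OF sum_\<pi>_nonopt_le])
    show "(\<Sum>x\<in>S - Opt. \<pi> n x * (dens V\<^sub>1 n x)\<^sup>2) \<le> sqnorm n (dens V\<^sub>1 n)"
      unfolding sqnorm_def using finite_S \<pi>_nonneg by (intro sum_mono2) auto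
  qed (use \<pi>_nonneg in \<open>auto intro: sum_nonneg\<close>)
  finally show ?thesis .
qed

lemma sqnorm_dens_bounded:
  assumes "V\<^sub>1 \<in> S" and "S - Opt \<noteq> {}"
  shows "\<exists>B. eventually (\<lambda>n. sqnorm n (dens V\<^sub>1 n) \<le> B) sequentially"
proof -
  define c where "c n = (2 * (real (card S))\<^sup>2 + 1) * exp (- beta n * eta) / (real n + 1)" for n
  obtain n\<^sub>0 where growth: "\<And>n. n \<ge> n\<^sub>0 \<Longrightarrow> sqnorm (Suc n) (dens V\<^sub>1 (Suc n)) \<le> sqnorm n (dens V\<^sub>1 n) * (1 + c n)"
    using sqnorm_dens_Suc_le[OF assms(1)] by (auto simp: c_def eventually_sequentially)
  have "summable c"
    unfolding c_def times_divide_eq_right[symmetric]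
    using summable_exp_beta_div[OF eta_pos[OF assms(2)]] by (rule summable_mult)
  moreover have "0 \<le> c n" for n
    by (simp add: c_def)
  ultimately have "\<And>n. n \<ge> n\<^sub>0 \<Longrightarrow> sqnorm n (dens V\<^sub>1 n) \<le> sqnorm n\<^sub>0 (dens V\<^sub>1 n\<^sub>0) * exp (suminf c)"
    using le_exp_suminf_of_growth[of n\<^sub>0 "\<lambda>n. sqnorm n (dens V\<^sub>1 n)" c, OF growth] sqnorm_nonneg
    by blast
  then show ?thesis
    unfolding eventually_sequentially by blast
qed

theorem prob_Opt_tendsto_1:
  assumes "V\<^sub>1 \<in> S"
  shows "(\<lambda>n. measure_pmf.prob (sa_law E N C V\<^sub>1 n) Opt) \<longlonglongrightarrow> 1"
proof (cases "S - Opt = {}")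
  case True
  then show ?thesis
    unfolding prob_Opt_eq[OF assms] True by simp
next
  case False
  let ?p = "\<lambda>n. \<Sum>x\<in>S - Opt. pmf (sa_law E N C V\<^sub>1 n) x"
  obtain B where B: "eventually (\<lambda>n. sqnorm n (dens V\<^sub>1 n) \<le> B) sequentially"
    using sqnorm_dens_bounded[OF assms False] by blast
  have bound: "eventually (\<lambda>n. ?p n \<le> sqrt ((real (card S))\<^sup>2 * exp (- beta n * eta) * B)) sequentially"
    using B
  proof eventually_elim
    case (elim n)
    have "(?p n)\<^sup>2 \<le> (real (card S))\<^sup>2 * exp (- beta n * eta) * sqnorm n (dens V\<^sub>1 n)"
      by (rule nonopt_mass_sq_le[OF assms])
    also have "\<dots> \<le> (real (card S))\<^sup>2 * exp (- beta n * eta) * B"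
      using elim by (intro mult_left_mono) auto
    finally show ?case
      by (rule real_le_rsqrt)
  qed
  have "(\<lambda>n. sqrt ((real (card S))\<^sup>2 * exp (- beta n * eta) * B)) \<longlonglongrightarrow> 0"
    using tendsto_real_sqrt[OF tendsto_mult_left_zero[OF tendsto_mult_right_zero[OF
          exp_beta_tendsto_0[OF eta_pos[OF False]]]]]
    by simp
  from tendsto_sandwich[OF _ bound tendsto_const this] have "?p \<longlonglongrightarrow> 0"
    by (simp add: sum_nonneg)
  then show ?thesis
    using tendsto_diff[OF tendsto_const[of 1] \<open>?p \<longlonglongrightarrow> 0\<close>] by (simp add: prob_Opt_eq[OF assms])
qed

end

section \<open>The swap graph on \<open>m\<close>-subsets\<close>

definition key_less :: "(nat \<Rightarrow> real) \<Rightarrow> (nat \<Rightarrow> nat) \<Rightarrow> nat \<Rightarrow> nat \<Rightarrow> bool" where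
  "key_less u rk k k' \<longleftrightarrow> u k < u k' \<or> (u k = u k' \<and> rk k < rk k')"

definition rank :: "(nat \<Rightarrow> real) \<Rightarrow> (nat \<Rightarrow> nat) \<Rightarrow> nat \<Rightarrow> nat \<Rightarrow> nat" where
  "rank u rk K k = card {k' \<in> {1..K}. key_less u rk k' k}"

lemma key_less_asym: "key_less u rk k k' \<Longrightarrow> \<not> key_less u rk k' k"
  by (auto simp: key_less_def)

lemma key_less_total:
  assumes "inj_on rk {1..K}" and "k \<in> {1..K}" and "k' \<in> {1..K}" and "k \<noteq> k'"
  shows "key_less u rk k k' \<or> key_less u rk k' k"
  using assms inj_on_eq_iff[OF assms(1,2,3)] by (auto simp: key_less_def)

lemma rank_less:
  assumes "k \<in> {1..K}" and "key_less u rk k k'"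
  shows "rank u rk K k < rank u rk K k'"
  unfolding rank_def
proof (rule psubset_card_mono)
  show "{k'' \<in> {1..K}. key_less u rk k'' k} \<subset> {k'' \<in> {1..K}. key_less u rk k'' k'}"
    using assms by (auto simp: key_less_def)
qed simp

lemma argmin_u_eqI:
  assumes "a \<in> V" and least: "\<And>k. k \<in> V \<Longrightarrow> k \<noteq> a \<Longrightarrow> key_less u rk a k"
  shows "argmin_u u rk V = a"
  unfolding argmin_u_def key_less_def[symmetric]
proof (rule the_equality)
  show "a \<in> V \<and> (\<forall>k\<in>V. k \<noteq> a \<longrightarrow> key_less u rk a k)"
    using assms by blast
next
  fix x
  assume x: "x \<in> V \<and> (\<forall>k\<in>V. k \<noteq> x \<longrightarrow> key_less u rk x k)"
  show "x = a"
  proof (rule ccontr)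
    assume "x \<noteq> a"
    then have "key_less u rk x a" and "key_less u rk a x"
      using x assms by auto
    then show False
      using key_less_asym by blast
  qed
qed

lemma argmin_u_key_less:
  assumes "V \<subseteq> {1..K}" and "V \<noteq> {}" and inj: "inj_on rk {1..K}"
  shows "argmin_u u rk V \<in> V" and "\<And>k. k \<in> V \<Longrightarrow> k \<noteq> argmin_u u rk V \<Longrightarrow> key_less u rk (argmin_u u rk V) k"
proof -
  have "finite V"
    using assms(1) finite_subset by blast
  have "Min (rank u rk K ` V) \<in> rank u rk K ` V"
    using \<open>finite V\<close> assms(2) by (intro Min_in) auto
  then obtain a where a: "a \<in> V" "rank u rk K a = Min (rank u rk K ` V)"
    by auto
  have least: "key_less u rk a k" if "k \<in> V" "k \<noteq> a" for k
  proof (rule ccontr)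
    assume "\<not> key_less u rk a k"
    then have "rank u rk K k < rank u rk K a"
      using key_less_total[OF inj, of a k u] rank_less[of k K u rk a] a(1) that assms(1) by blast
    moreover have "rank u rk K a \<le> rank u rk K k"
      using a \<open>finite V\<close> that(1) by simp
    ultimately show False
      by simp
  qed
  then show "argmin_u u rk V \<in> V" and "\<And>k. k \<in> V \<Longrightarrow> k \<noteq> argmin_u u rk V \<Longrightarrow> key_less u rk (argmin_u u rk V) k"
    using argmin_u_eqI[OF a(1) least] a(1) by auto
qed

lemma swap_mem_vertices:
  assumes "V \<in> vertices K m" and "a \<in> V" and "b \<in> {1..K}" and "b \<notin> V"
  shows "insert b (V - {a}) \<in> vertices K m"
  using assms card_Diff_singleton[of a V] finite_subset[of V "{1..K}"] card_gt_0_iff[of V]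
  by (auto simp: vertices_def)

lemma swap_mem_nbrs:
  assumes "V \<in> vertices K m" and "b \<in> {1..K}" and "b \<notin> V" and "inj_on rk {1..K}" and "1 \<le> m"
  shows "insert b (V - {argmin_u u rk V}) \<in> nbrs u rk K m V"
proof -
  let ?a = "argmin_u u rk V"
  have "V \<subseteq> {1..K}" and "card V = m" and "finite V"
    using assms(1) finite_subset by (auto simp: vertices_def)
  moreover have "V \<noteq> {}"
    using \<open>card V = m\<close> assms(5) by auto
  then have "?a \<in> V"
    using argmin_u_key_less(1)[OF \<open>V \<subseteq> {1..K}\<close> _ assms(4)] by blast
  moreover have "V \<inter> insert b (V - {?a}) = V - {?a}"
    using assms(3) by auto
  ultimately show ?thesis
    using swap_mem_vertices[OF assms(1) _ assms(2,3)] assms(3)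
    by (auto simp: nbrs_def active_nbr_def card_Diff_singleton)
qed

lemma finite_vertices: "finite (vertices K m)"
  unfolding vertices_def by (rule finite_subset[of _ "Pow {1..K}"]) auto

lemma vertices_subset_eq: "V \<in> vertices K m \<Longrightarrow> W \<in> vertices K m \<Longrightarrow> V \<subseteq> W \<Longrightarrow> V = W"
  using finite_subset[of W "{1..K}"] by (auto simp: vertices_def card_subset_eq)

text \<open>The witness maximises the sum of ranks, so it consists of the \<open>m\<close> largest keys.\<close>
lemma top_vertex_exists:
  assumes inj: "inj_on rk {1..K}" and "m \<le> K"
  obtains T where "T \<in> vertices K m" and "\<And>t s. t \<in> T \<Longrightarrow> s \<in> {1..K} - T \<Longrightarrow> key_less u rk s t"
proof -
  let ?f = "\<lambda>V. \<Sum>k\<in>V. rank u rk K k"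
  have "{1..m} \<in> vertices K m"
    using assms(2) by (auto simp: vertices_def)
  then have "Max (?f ` vertices K m) \<in> ?f ` vertices K m"
    using finite_vertices by (intro Max_in) auto
  then obtain T where T: "T \<in> vertices K m" "?f T = Max (?f ` vertices K m)"
    by auto
  show thesis
  proof (rule that[OF T(1)])
    fix t s
    assume t: "t \<in> T" and s: "s \<in> {1..K} - T"
    show "key_less u rk s t"
    proof (rule ccontr)
      assume "\<not> key_less u rk s t"
      moreover have "T \<subseteq> {1..K}" and "finite T"
        using T(1) finite_subset by (auto simp: vertices_def)
      ultimately have "rank u rk K t < rank u rk K s"
        using key_less_total[OF inj, of t s u] rank_less[of t K u rk s] t s by blast
      moreover have "?f (insert s (T - {t})) = rank u rk K s + ?f (T - {t})"
        and "?f T = rank u rk K t + ?f (T - {t})"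
        using \<open>finite T\<close> s t by (simp_all add: sum.remove)
      moreover have "?f (insert s (T - {t})) \<le> ?f T"
        using T finite_vertices swap_mem_vertices[OF T(1) t] s by simp
      ultimately show False
        by linarith
    qed
  qed
qed

lemma argmin_u_notin_top:
  assumes inj: "inj_on rk {1..K}" and "1 \<le> m" and T: "T \<in> vertices K m"
    and top: "\<And>t s. t \<in> T \<Longrightarrow> s \<in> {1..K} - T \<Longrightarrow> key_less u rk s t"
    and V: "V \<in> vertices K m" and "V \<noteq> T"
  shows "argmin_u u rk V \<notin> T"
proof
  assume "argmin_u u rk V \<in> T"
  have "V \<subseteq> {1..K}" and "V \<noteq> {}"
    using V assms(2) by (auto simp: vertices_def)
  then have "V \<subseteq> T"
    using argmin_u_key_less[OF _ _ inj, where V = V and u = u] top \<open>argmin_u u rk V \<in> T\<close> key_less_asym by blast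
  then show False
    using vertices_subset_eq[OF V T] \<open>V \<noteq> T\<close> by blast
qed

lemma rtranclp_swap_to_top:
  assumes inj: "inj_on rk {1..K}" and "1 \<le> m" and T: "T \<in> vertices K m"
    and top: "\<And>t s. t \<in> T \<Longrightarrow> s \<in> {1..K} - T \<Longrightarrow> key_less u rk s t"
    and "V \<in> vertices K m"
  shows "(\<lambda>a b. a \<in> vertices K m \<and> b \<in> nbrs u rk K m a)\<^sup>*\<^sup>* V T"
  using assms(5)
proof (induction "m - card (V \<inter> T)" arbitrary: V rule: less_induct)
  case less
  let ?a = "argmin_u u rk V"
  have V: "V \<subseteq> {1..K}" "card V = m" "finite V"
    using less.prems finite_subset by (auto simp: vertices_def)
  show ?case
  proof (cases "V = T")
    case False
    have "?a \<notin> T"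
      using argmin_u_notin_top[OF inj assms(2) T top less.prems False] .
    obtain t where t: "t \<in> T" "t \<notin> V"
      using vertices_subset_eq[OF T less.prems] False by blast
    then have "t \<in> {1..K}"
      using T by (auto simp: vertices_def)
    define V' where "V' = insert t (V - {?a})"
    have "V' \<in> nbrs u rk K m V"
      unfolding V'_def by (rule swap_mem_nbrs[OF less.prems \<open>t \<in> {1..K}\<close> t(2) inj assms(2)])
    moreover have "V' \<inter> T = insert t (V \<inter> T)"
      using t \<open>?a \<notin> T\<close> by (auto simp: V'_def)
    then have "card (V' \<inter> T) = Suc (card (V \<inter> T))"
      using V(3) t(2) by simp
    moreover have "card (V \<inter> T) < m"
      using V vertices_subset_eq[OF less.prems T] False card_subset_eq[of V "V \<inter> T"]
      by (metis Int_lower1 Int_lower2 card_mono le_neq_implies_less)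
    ultimately show ?thesis
      using less.hyps[of V'] less.prems nbrs_def
      by (auto intro: converse_rtranclp_into_rtranclp)
  qed simp
qed

lemma swap_graph_connected:
  assumes "inj_on rk {1..K}" and "1 \<le> m" and "m \<le> K"
    and "x \<in> vertices K m" and "y \<in> vertices K m"
  shows "(\<lambda>a b. a \<in> vertices K m \<and> b \<in> nbrs u rk K m a)\<^sup>*\<^sup>* x y"
proof -
  let ?G = "\<lambda>a b. a \<in> vertices K m \<and> b \<in> nbrs u rk K m a"
  obtain T where T: "T \<in> vertices K m" "\<And>t s. t \<in> T \<Longrightarrow> s \<in> {1..K} - T \<Longrightarrow> key_less u rk s t"
    using top_vertex_exists[OF assms(1,3)] by blast
  have "?G\<inverse>\<inverse> \<le> ?G"
    by (auto simp: nbrs_def)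
  then have "?G\<^sup>*\<^sup>* T y"
    using rtranclp_converseI[OF rtranclp_swap_to_top[OF assms(1,2) T assms(5)]] rtranclp_mono by blast
  then show ?thesis
    using rtranclp_swap_to_top[OF assms(1,2) T assms(4)] by (rule rtranclp_trans[rotated])
qed

lemma annealing_graph_swap:
  assumes "1 \<le> m" and "m < K" and inj: "inj_on rk {1..K}"
  shows "annealing_graph (vertices K m) (nbrs u rk K m)"
proof
  show "finite (vertices K m)"
    by (rule finite_vertices)
  show "vertices K m \<noteq> {}"
    using assms(2) by (auto simp: vertices_def intro!: exI[of _ "{1..m}"])
  fix x
  assume x: "x \<in> vertices K m"
  show "nbrs u rk K m x \<subseteq> vertices K m"
    by (auto simp: nbrs_def)
  show "x \<notin> nbrs u rk K m x"
    using x assms(1) by (auto simp: nbrs_def active_nbr_def vertices_def)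
  have "x \<subseteq> {1..K}" "card x = m"
    using x by (auto simp: vertices_def)
  moreover have "\<not> {1..K} \<subseteq> x"
  proof
    assume "{1..K} \<subseteq> x"
    then have "card {1..K} \<le> card x"
      using \<open>x \<subseteq> {1..K}\<close> finite_subset by (intro card_mono) auto
    then show False
      using \<open>card x = m\<close> assms(2) by simp
  qed
  then obtain b where "b \<in> {1..K}" "b \<notin> x"
    by blast
  then show "nbrs u rk K m x \<noteq> {}"
    using swap_mem_nbrs[OF x _ _ inj assms(1)] by blast
  fix y
  assume y: "y \<in> vertices K m"
  show "y \<in> nbrs u rk K m x \<longleftrightarrow> x \<in> nbrs u rk K m y"
    using x y by (auto simp: nbrs_def)
  show "(\<lambda>a b. a \<in> vertices K m \<and> b \<in> nbrs u rk K m a)\<^sup>*\<^sup>* x y"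
    using swap_graph_connected[OF inj assms(1) _ x y] assms(2) by simp
qed

lemma length_filter_greater_sorted:
  assumes "sorted xs" and "i < length xs"
  shows "length (filter (\<lambda>x. xs ! i < x) xs) \<le> length xs - Suc i"
proof -
  have "{j. j < length xs \<and> xs ! i < xs ! j} \<subseteq> {Suc i..<length xs}"
    using sorted_nth_mono[OF assms(1)] assms(2) by (force simp: not_less_eq_eq[symmetric])
  then show ?thesis
    by (metis card_atLeastLessThan card_mono finite_atLeastLessThan length_filter_conv_card)
qed

lemma Min_le_mth_largest:
  assumes "V \<in> vertices K m" and "1 \<le> m" and "m \<le> K"
  shows "Min (u ` V) \<le> mth_largest u K m"
proof (rule ccontr)
  define xs where "xs = sort (map u [1..<K+1])"
  have "length xs = K" and "sorted xs"
    by (simp_all add: xs_def)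
  have v: "mth_largest u K m = xs ! (K - m)"
    unfolding mth_largest_def xs_def[symmetric] using assms(2,3) \<open>length xs = K\<close> by (simp add: rev_nth)
  have V: "V \<subseteq> {1..K}" "card V = m" "finite V"
    using assms(1) finite_subset by (auto simp: vertices_def)
  assume "\<not> Min (u ` V) \<le> mth_largest u K m"
  moreover have "u ` V \<noteq> {}" and "finite (u ` V)"
    using V assms(2) by auto
  ultimately have "\<forall>k\<in>V. xs ! (K - m) < u k"
    by (simp add: v not_le Min_gr_iff)
  then have "V \<subseteq> {k \<in> {1..K}. xs ! (K - m) < u k}"
    using V(1) by blast
  from card_mono[OF _ this] have "m \<le> card {k \<in> {1..K}. xs ! (K - m) < u k}"
    using V(2) by simp
  also have "\<dots> = length (filter (\<lambda>x. xs ! (K - m) < x) xs)"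
  proof -
    have "length (filter (\<lambda>x. xs ! (K - m) < x) xs) = length (filter (\<lambda>k. xs ! (K - m) < u k) [1..<K+1])"
      unfolding xs_def by (simp only: filter_sort length_sort filter_map length_map o_def)
    also have "\<dots> = card (set (filter (\<lambda>k. xs ! (K - m) < u k) [1..<K+1]))"
      by (rule distinct_card[symmetric]) simp
    finally show ?thesis
      by (auto intro: arg_cong[where f = card])
  qed
  also have "\<dots> \<le> m - 1"
    using length_filter_greater_sorted[OF \<open>sorted xs\<close>, of "K - m"] \<open>length xs = K\<close> assms(2,3) by simp
  finally show False
    using assms(2) by simp
qed

lemma diff_le_fun_range_width:
  assumes "bdd_above (range (case_prod \<Phi>))" and "bdd_below (range (case_prod \<Phi>))"
  shows "\<Phi> f V - \<Phi> g W \<le> fun_range_width \<Phi>"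
  using cSUP_upper[of "(f, V)" UNIV "case_prod \<Phi>"] cINF_lower[of "case_prod \<Phi>" UNIV "(g, W)"] assms
  by (simp add: fun_range_width_def)

lemma energy_diff_le_temp_const:
  assumes "V \<in> vertices K m" and "W \<in> vertices K m" and "1 \<le> m" and "m \<le> K"
    and "bdd_above (range (case_prod Phig))" and "bdd_below (range (case_prod Phig))"
    and "bdd_above (range (case_prod Phip))" and "bdd_below (range (case_prod Phip))"
    and "0 < \<alpha>" and "0 < \<gamma>"
  shows "energy u g p Phig Phip \<alpha> \<gamma> V - energy u g p Phig Phip \<alpha> \<gamma> W \<le> temp_const u K m Phig Phip \<alpha> \<gamma>"
proof -
  have "W \<subseteq> {1..K}" and "W \<noteq> {}"
    using assms(2,3) by (auto simp: vertices_def)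
  then have "Min (u ` {1..K}) \<le> Min (u ` W)"
    by (intro Min_antimono) auto
  moreover have "\<alpha> * (Phig (restrict g V) V - Phig (restrict g W) W) \<le> \<alpha> * fun_range_width Phig"
    and "\<gamma> * (Phip (restrict p V) V - Phip (restrict p W) W) \<le> \<gamma> * fun_range_width Phip"
    using assms(5-10) diff_le_fun_range_width by (auto intro: mult_left_mono)
  ultimately show ?thesis
    using Min_le_mth_largest[OF assms(1,3,4), of u]
    by (simp add: energy_def temp_const_def algebra_simps)
qed

theorem theorem4:
  fixes K m :: nat
    and u g p :: "nat \<Rightarrow> real"
    and rk :: "nat \<Rightarrow> nat"
    and Phig Phip :: "(nat \<Rightarrow> real) \<Rightarrow> nat set \<Rightarrow> real"
    and \<alpha> \<gamma> :: real
    and V1 :: "nat set"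
  assumes "1 \<le> m" and "m < K"
    and "inj_on rk {1..K}"
    and "bdd_above (range (case_prod Phig))" and "bdd_below (range (case_prod Phig))"
    and "bdd_above (range (case_prod Phip))" and "bdd_below (range (case_prod Phip))"
    and "\<alpha> > 0" and "\<gamma> > 0"
    and "V1 \<in> vertices K m"
  defines "E \<equiv> energy u g p Phig Phip \<alpha> \<gamma>"
    and "J \<equiv> {V \<in> vertices K m. \<forall>W \<in> vertices K m. energy u g p Phig Phip \<alpha> \<gamma> W \<le> energy u g p Phig Phip \<alpha> \<gamma> V}"
  shows "(\<lambda>j. measure_pmf.prob
            (sa_law E (nbrs u rk K m) (temp_const u K m Phig Phip \<alpha> \<gamma>) V1 j) J)
         \<longlonglongrightarrow> 1"
proof -
  let ?C = "temp_const u K m Phig Phip \<alpha> \<gamma>"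
  interpret annealing_graph "vertices K m" "nbrs u rk K m"
    using annealing_graph_swap assms(1-3) .
  have E_diff: "E V - E W \<le> ?C" if "V \<in> vertices K m" "W \<in> vertices K m" for V W
    unfolding assms(11) using that assms(1,2,4-9) by (intro energy_diff_le_temp_const) auto
  show ?thesis
  proof (cases "0 < ?C")
    case True
    interpret annealing "vertices K m" "nbrs u rk K m" E ?C
      using E_diff True by unfold_locales
    have "Opt = J"
      unfolding Opt_def by (simp add: assms(11,12))
    then show ?thesis
      using prob_Opt_tendsto_1[OF assms(10)] by simp
  next
    case False
    then have "J = vertices K m"
      using E_diff by (force simp: assms(11,12))
    then show ?thesis
      using prob_sa_law_S[OF assms(10)] by simp
  qed
qed

end
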